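(* Assume the Lyapunov exponent $L:\mathbb{R}\to[0,\infty)$ is continuous. Then $L$ attains its minimum on $\mathbb{R}$, and for $P$-almost every $\omega\in\Omega$, $$0\le\liminf_{N\to\infty}\left(-\frac1N\log\mathcal{I}(N,\omega)\right)\le\limsup_{N\to\infty}\left(-\frac1N\log\mathcal{I}(N,\omega)\right)\le2\min_{E\in\mathbb{R}}L(E).$$
   Context: Let $(\Omega,\mathcal F,P)$ be a probability space and $\phi:\Omega\to\Omega$ a measurable bijection with measurable inverse that preserves $P$ and is ergodic (every $\phi$-invariant measurable set has probability $0$ or $1$). Let $f:\Omega\to\mathbb{R}$ be bounded and measurable, and put $v_\omega(n)=f(\phi^n\omega)$, $n\in\mathbb{Z}$. For $E\in\mathbb{R}$ let $T_{N,\omega}(E)=A_{N,\omega}(E)\cdots A_{1,\omega}(E)$ with $A_{n,\omega}(E)=\begin{pmatrix}v_\omega(n)-E&-1\\1&0\end{pmatrix}$; $\|\cdot\|$ is the operator norm. The Lyapunov exponent is $L(E)=\lim_{N\to\infty}\frac1N\int_\Omega\log\|T_{N,\omega}(E)\|\,dP(\omega)=\inf_{N\ge1}\frac1N\int_\Omega\log\|T_{N,\omega}(E)\|\,dP(\omega)$. Define $\mathcal{I}(N,\omega)=\int_{-\infty}^{\infty}\frac{dE}{\|T_{N,\omega}(E)\|^2}$. *)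

theory Defs
  imports "HOL-Probability.Probability"
begin

text \<open>Potential v_omega(n) = f(phi^n omega) (only n >= 1 is needed below).\<close>
definition pot :: "('a \<Rightarrow> 'a) \<Rightarrow> ('a \<Rightarrow> real) \<Rightarrow> 'a \<Rightarrow> nat \<Rightarrow> real" where
  "pot phi f \<omega> n = f ((phi ^^ n) \<omega>)"

definition step_mat :: "('a \<Rightarrow> 'a) \<Rightarrow> ('a \<Rightarrow> real) \<Rightarrow> nat \<Rightarrow> 'a \<Rightarrow> real \<Rightarrow> real^2^2" where
  "step_mat phi f n \<omega> E = (\<chi> i j.
      if i = 1 then (if j = 1 then pot phi f \<omega> n - E else -1)
      else (if j = 1 then 1 else 0))"

fun transfer :: "('a \<Rightarrow> 'a) \<Rightarrow> ('a \<Rightarrow> real) \<Rightarrow> nat \<Rightarrow> 'a \<Rightarrow> real \<Rightarrow> real^2^2" where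
  "transfer phi f 0 \<omega> E = mat 1"
| "transfer phi f (Suc N) \<omega> E = step_mat phi f (Suc N) \<omega> E ** transfer phi f N \<omega> E"

definition opnorm :: "real^2^2 \<Rightarrow> real" where
  "opnorm A = onorm (\<lambda>x. A *v x)"

definition lyap :: "'a measure \<Rightarrow> ('a \<Rightarrow> 'a) \<Rightarrow> ('a \<Rightarrow> real) \<Rightarrow> real \<Rightarrow> real" where
  "lyap M phi f E = lim (\<lambda>N. (1 / real N) * (\<integral>\<omega>. ln (opnorm (transfer phi f N \<omega> E)) \<partial>M))"

definition Iint :: "('a \<Rightarrow> 'a) \<Rightarrow> ('a \<Rightarrow> real) \<Rightarrow> nat \<Rightarrow> 'a \<Rightarrow> real" where
  "Iint phi f N \<omega> = (\<integral>E. 1 / (opnorm (transfer phi f N \<omega> E))\<^sup>2 \<partial>lborel)"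

end

theory Submission
  imports Defs
begin

(* The transfer matrices have determinant one, so log ||T_N(E)|| >= 0 and the
   integrand is at most one; for |E| large, ||T_N(E)|| grows like (|E| - C - 1)^N, so the
   integrals I(N, omega) are bounded uniformly in N, which gives liminf >= 0.  L is the infimum
   of the subadditive averages (1/k) E log ||T_k(E)|| (Fekete) and tends to infinity with |E|,
   so a continuous L attains its minimum at some E0.  For the upper bound fix k with
   (1/k) E log ||T_k(E0)|| close to L(E0); chopping [0, N) into blocks of length k and using
   Birkhoff's theorem for log ||T_k(E0)||, together with the Lipschitz dependence of T_k on E,
   gives log ||T_N(omega, E)|| <= N (L(E0) + eta) + B(omega) uniformly for |E - E0| <= delta.
   Integrating ||T_N||^-2 over that interval gives I(N, omega) >= 2 delta exp(-2 N (L(E0) + eta)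
   - 2 B), i.e. the limsup is at most 2 (L(E0) + eta). *)

section \<open>Operator norms of 2 by 2 matrices\<close>

lemma opnorm_mult_le: "opnorm (A ** B) \<le> opnorm A * opnorm B"
proof -
  have "(\<lambda>x. (A ** B) *v x) = (\<lambda>x. A *v x) \<circ> (\<lambda>x. B *v x)"
    by (rule ext) (simp add: matrix_vector_mul_assoc)
  then show ?thesis unfolding opnorm_def
    by (simp add: onorm_compose)
qed

lemma opnorm_add_le: "opnorm (A + B) \<le> opnorm A + opnorm B"
proof -
  have "(\<lambda>x. (A + B) *v x) = (\<lambda>x. A *v x + B *v x)"
    by (rule ext) (simp add: matrix_vector_mult_add_rdistrib)
  then show ?thesis unfolding opnorm_def
    by (simp add: onorm_triangle)
qed

lemma opnorm_nonneg: "0 \<le> opnorm A"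
  unfolding opnorm_def by (simp add: onorm_pos_le)

lemma opnorm_mat_1: "opnorm (mat 1) = 1"
  unfolding opnorm_def matrix_vector_mul_lid by (simp add: onorm_id)

lemma abs_entry_le_opnorm: "\<bar>A $ i $ j\<bar> \<le> opnorm A"
  unfolding opnorm_def by (rule matrix_component_le_onorm)

lemma opnorm_le_sum_abs_entries:
  "opnorm A \<le> \<bar>A$1$1\<bar> + \<bar>A$1$2\<bar> + \<bar>A$2$1\<bar> + \<bar>A$2$2\<bar>"
  using onorm_le_matrix_component_sum[of A] unfolding opnorm_def by (simp add: sum_2)

lemma column_norm_sq_le_opnorm_sq: "(A$1$j)\<^sup>2 + (A$2$j)\<^sup>2 \<le> (opnorm A)\<^sup>2"
proof -
  have "norm (column j A) \<le> opnorm A"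
    unfolding opnorm_def by (rule norm_column_le_onorm)
  moreover have "norm (column j A) = sqrt ((A$1$j)\<^sup>2 + (A$2$j)\<^sup>2)"
    by (simp add: norm_vec_def L2_set_def sum_2 column_def)
  ultimately have "sqrt ((A$1$j)\<^sup>2 + (A$2$j)\<^sup>2) \<le> opnorm A"
    by simp
  then show ?thesis
    by (metis abs_of_nonneg opnorm_nonneg real_sqrt_le_iff sqrt_le_D)
qed

lemma one_le_opnorm_if_det_eq_1:
  assumes "det A = 1"
  shows "1 \<le> opnorm A"
proof -
  have "A$1$1 * A$2$2 - A$1$2 * A$2$1 = 1"
    using assms by (simp add: det_2)
  moreover have "0 \<le> (A$1$1 - A$2$2)\<^sup>2 + (A$1$2 + A$2$1)\<^sup>2"
    by simp
  ultimately have "2 \<le> (A$1$1)\<^sup>2 + (A$2$1)\<^sup>2 + (A$1$2)\<^sup>2 + (A$2$2)\<^sup>2"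
    by (simp add: power2_eq_square algebra_simps)
  then have "1 \<le> (opnorm A)\<^sup>2"
    using column_norm_sq_le_opnorm_sq[of A 1] column_norm_sq_le_opnorm_sq[of A 2] by simp
  then show ?thesis
    using opnorm_nonneg[of A] power2_le_imp_le[of 1 "opnorm A"] by simp
qed

lemma opnorm_lipschitz: "\<bar>opnorm A - opnorm B\<bar> \<le> 4 * norm (A - B)"
proof -
  have entry: "\<bar>D $ i $ j\<bar> \<le> norm D" for D :: "real^2^2" and i j
    using component_le_norm_cart[where x="D $ i" and i=j]
      Finite_Cartesian_Product.norm_nth_le[where x=D and i=i] by linarith
  have bound: "opnorm D \<le> 4 * norm D" for D :: "real^2^2"
    using opnorm_le_sum_abs_entries[of D] entry[of D 1 1] entry[of D 1 2]
      entry[of D 2 1] entry[of D 2 2] by linarith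
  have "opnorm A \<le> opnorm (A - B) + opnorm B" "opnorm B \<le> opnorm (B - A) + opnorm A"
    using opnorm_add_le[of "A - B" B] opnorm_add_le[of "B - A" A] by simp_all
  then show ?thesis
    using bound[of "A - B"] bound[of "B - A"] norm_minus_commute[of A B] by linarith
qed

lemma continuous_on_opnorm: "continuous_on UNIV opnorm"
  by (rule lipschitz_on_continuous_on[of 4]) (auto intro!: lipschitz_onI simp: dist_norm opnorm_lipschitz)

lemma matrix_2x2_measurable:
  fixes F :: "'b \<Rightarrow> real^2^2"
  assumes "\<And>i j. (\<lambda>x. F x $ i $ j) \<in> borel_measurable N"
  shows "F \<in> borel_measurable N"
proof -
  have eq: "F = (\<lambda>x. \<Sum>i\<in>UNIV. \<Sum>j\<in>UNIV. (F x $ i $ j) *\<^sub>R axis i (axis j (1::real)))"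
    by (rule ext) (simp add: vec_eq_iff sum_2 axis_def forall_2)
  show ?thesis
    by (subst eq) (intro borel_measurable_sum borel_measurable_scaleR assms borel_measurable_const)
qed

lemma matrix_entry_measurable:
  fixes F :: "'b \<Rightarrow> real^2^2"
  assumes "F \<in> borel_measurable N"
  shows "(\<lambda>x. F x $ i $ j) \<in> borel_measurable N"
  by (rule borel_measurable_continuous_on[OF _ assms]) (intro continuous_intros)

section \<open>Subadditive sequences\<close>

lemma subadditive_mult_le:
  fixes u :: "nat \<Rightarrow> real"
  assumes sub: "\<And>n m. u (n + m) \<le> u n + u m" and "u 0 = 0"
  shows "u (q * k) \<le> q * u k"
proof (induction q)
  case (Suc q)
  have "u (Suc q * k) \<le> u (q * k) + u k"
    using sub[of "q * k" k] by (simp add: add.commute)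
  then show ?case using Suc by (simp add: algebra_simps)
qed (simp add: assms(2))

lemma subadditive_avg_le:
  fixes u :: "nat \<Rightarrow> real"
  assumes sub: "\<And>n m. u (n + m) \<le> u n + u m" and nonneg: "\<And>n. 0 \<le> u n" and "u 0 = 0"
    and k: "1 \<le> k" and n: "1 \<le> n"
  shows "u n / n \<le> u k / k + (\<Sum>j<k. u j) / n"
proof -
  define q where "q = n div k"
  have "u n \<le> u (q * k) + u (n mod k)"
    using sub[of "q * k" "n mod k"] by (simp add: q_def)
  also have "\<dots> \<le> q * u k + (\<Sum>j<k. u j)"
    using subadditive_mult_le[OF sub \<open>u 0 = 0\<close>, of q k] k nonneg
    by (intro add_mono member_le_sum) auto
  also have "q * u k \<le> n * (u k / k)"
  proof -
    have "real (q * k) \<le> n"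
      unfolding q_def by (simp del: of_nat_mult add: div_times_less_eq_dividend)
    then have "real (q * k) * (u k / k) \<le> n * (u k / k)"
      using nonneg[of k] by (intro mult_right_mono) auto
    then show ?thesis using k by simp
  qed
  finally show ?thesis
    using n by (simp add: field_simps)
qed

lemma subadditive_tendsto_Inf:
  fixes u :: "nat \<Rightarrow> real"
  assumes sub: "\<And>n m. u (n + m) \<le> u n + u m" and nonneg: "\<And>n. 0 \<le> u n" and "u 0 = 0"
  shows "(\<lambda>n. u n / n) \<longlonglongrightarrow> (INF n\<in>{1..}. u n / n)"
proof (rule LIMSEQ_I)
  define L where "L = (INF n\<in>{1..}. u n / n)"
  have bdd: "bdd_below ((\<lambda>n. u n / n) ` {1..})"
    by (rule bdd_belowI[of _ 0]) (auto intro: nonneg divide_nonneg_nonneg)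
  fix r :: real assume "0 < r"
  then have "L < L + r / 2" by simp
  then obtain k where k: "1 \<le> k" "u k / k < L + r / 2"
    unfolding L_def using bdd by (subst (asm) cINF_less_iff) auto
  obtain N0 :: nat where N0: "2 * (\<Sum>j<k. u j) / r < N0"
    using reals_Archimedean2 by blast
  have "norm (u n / n - L) < r" if n: "Suc N0 \<le> n" for n
  proof -
    have "2 * (\<Sum>j<k. u j) / r < n"
      using N0 n by linarith
    then have "(\<Sum>j<k. u j) / n < r / 2"
      using n \<open>0 < r\<close> by (simp add: field_simps)
    then have "u n / n < L + r"
      using subadditive_avg_le[OF sub nonneg \<open>u 0 = 0\<close> k(1), of n] k(2) n by linarith
    moreover have "L \<le> u n / n"
      unfolding L_def using bdd n by (intro cINF_lower) auto
    ultimately show ?thesis by simp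
  qed
  then show "\<exists>no. \<forall>n\<ge>no. norm (u n / real n - (INF n\<in>{1..}. u n / n)) < r"
    unfolding L_def by blast
qed

lemma subadditive_multiple_le:
  fixes l :: "nat \<Rightarrow> nat \<Rightarrow> real"
  assumes sub: "\<And>n m a. l (n + m) a \<le> l n a + l m (a + n)" and "\<And>a. l 0 a \<le> 0"
  shows "l (m * k) a \<le> (\<Sum>j<m. l k (a + j * k))"
proof (induction m)
  case (Suc m)
  have "l (Suc m * k) a \<le> l (m * k) a + l k (a + m * k)"
    using sub[of "m * k" k a] by (simp add: add.commute)
  then show ?case using Suc by simp
qed (simp add: assms(2))

lemma subadditive_residue_le:
  fixes l :: "nat \<Rightarrow> nat \<Rightarrow> real" and c :: real
  assumes sub: "\<And>n m a. l (n + m) a \<le> l n a + l m (a + n)"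
    and bound: "\<And>n a. l n a \<le> n * c" and "0 \<le> c" and "r < k"
  shows "l N 0 \<le> (\<Sum>j<(N - r) div k. l k (r + j * k)) + 2 * real k * c"
proof (cases "N < r")
  case True
  have "(\<Sum>j<(N - r) div k. l k (r + j * k)) = 0"
    using True by simp
  moreover have "l N 0 \<le> k * c"
    using bound[of N 0] True \<open>r < k\<close> \<open>0 \<le> c\<close> by (smt (verit) mult_right_mono of_nat_less_iff)
  moreover have "0 \<le> real k * c"
    using \<open>0 \<le> c\<close> by simp
  ultimately show ?thesis
    by simp
next
  case False
  define m where "m = (N - r) div k"
  define s where "s = (N - r) mod k"
  have "N = r + (m * k + s)" and "s < k"
    using False \<open>r < k\<close> by (simp_all add: m_def s_def)
  then have "l N 0 \<le> l r 0 + (l (m * k) r + l s (r + m * k))"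
    using sub[of r "m * k + s" 0] sub[of "m * k" s r] by simp
  also have "\<dots> \<le> r * c + ((\<Sum>j<m. l k (r + j * k)) + s * c)"
    using bound[of r 0] bound[of s "r + m * k"]
      subadditive_multiple_le[OF sub, of m k r] bound[of 0] by (intro add_mono) auto
  also have "\<dots> \<le> (\<Sum>j<m. l k (r + j * k)) + 2 * real k * c"
    using \<open>r < k\<close> \<open>s < k\<close> \<open>0 \<le> c\<close> mult_right_mono[of r k c] mult_right_mono[of s k c] by simp
  finally show ?thesis unfolding m_def .
qed

lemma sum_residue_classes_le:
  fixes g :: "nat \<Rightarrow> real"
  assumes "\<And>i. 0 \<le> g i" and "0 < k"
  shows "(\<Sum>r<k. \<Sum>j<(N - r) div k. g (r + j * k)) \<le> (\<Sum>i<N. g i)"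
proof -
  define S where "S = Sigma {..<k} (\<lambda>r. {..<(N - r) div k})"
  define h where "h p = fst p + snd p * k" for p :: "nat \<times> nat"
  have "inj_on h S"
  proof (rule inj_onI)
    fix p q assume "p \<in> S" "q \<in> S" "h p = h q"
    then have "fst p < k" "fst q < k"
      by (auto simp: S_def)
    then have "h p mod k = fst p" "h q mod k = fst q" "h p div k = snd p" "h q div k = snd q"
      by (simp_all add: h_def)
    then show "p = q"
      using \<open>h p = h q\<close> by (metis prod.collapse)
  qed
  moreover have "h ` S \<subseteq> {..<N}"
  proof
    fix i assume "i \<in> h ` S"
    then obtain r j where rj: "r < k" "j < (N - r) div k" "i = r + j * k"
      by (auto simp: S_def h_def)
    then have "(j + 1) * k \<le> (N - r) div k * k"
      by (intro mult_right_mono) auto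
    also have "\<dots> \<le> N - r"
      by (rule div_times_less_eq_dividend)
    finally show "i \<in> {..<N}"
      using rj \<open>0 < k\<close> by simp
  qed
  ultimately have "(\<Sum>i\<in>h ` S. g i) \<le> (\<Sum>i<N. g i)"
    by (intro sum_mono2) (auto intro: assms(1))
  moreover have "(\<Sum>i\<in>h ` S. g i) = (\<Sum>r<k. \<Sum>j<(N - r) div k. g (r + j * k))"
    using sum.reindex[OF \<open>inj_on h S\<close>, of g] by (simp add: S_def h_def sum.Sigma split_def)
  ultimately show ?thesis by simp
qed

text \<open>Averaging over the \<open>k\<close> possible offsets of a block decomposition of \<open>[0, N)\<close> into
  blocks of length \<open>k\<close>; only the two incomplete blocks at the ends are lost.\<close>

lemma subadditive_block_bound:
  fixes l :: "nat \<Rightarrow> nat \<Rightarrow> real" and c :: real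
  assumes sub: "\<And>n m a. l (n + m) a \<le> l n a + l m (a + n)"
    and nonneg: "\<And>n a. 0 \<le> l n a"
    and bound: "\<And>n a. l n a \<le> n * c"
    and "0 < k"
  shows "k * l N 0 \<le> (\<Sum>i<N. l k i) + 2 * (real k)\<^sup>2 * c"
proof -
  have "0 \<le> c" using nonneg[of 1 0] bound[of 1 0] by simp
  have "k * l N 0 = (\<Sum>r<k. l N 0)" by simp
  also have "\<dots> \<le> (\<Sum>r<k. (\<Sum>j<(N - r) div k. l k (r + j * k)) + 2 * real k * c)"
  proof (rule sum_mono)
    fix r assume "r \<in> {..<k}"
    then show "l N 0 \<le> (\<Sum>j<(N - r) div k. l k (r + j * k)) + 2 * real k * c"
      by (intro subadditive_residue_le[OF sub bound \<open>0 \<le> c\<close>]) simp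
  qed
  also have "\<dots> \<le> (\<Sum>i<N. l k i) + 2 * (real k)\<^sup>2 * c"
    using sum_residue_classes_le[of "l k" k N] nonneg \<open>0 < k\<close>
    by (simp add: sum.distrib power2_eq_square)
  finally show ?thesis .
qed

section \<open>Transfer matrices\<close>

lemma det_step_mat: "det (step_mat phi f n \<omega> E) = 1"
  by (simp add: det_2 step_mat_def)

lemma det_transfer: "det (transfer phi f n \<omega> E) = 1"
  by (induction n) (simp_all add: det_mul det_step_mat)

lemma one_le_opnorm_transfer: "1 \<le> opnorm (transfer phi f n \<omega> E)"
  by (rule one_le_opnorm_if_det_eq_1[OF det_transfer])

lemma opnorm_transfer_pos: "0 < opnorm (transfer phi f n \<omega> E)"
  using one_le_opnorm_transfer[of phi f n \<omega> E] by simp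

lemma pot_funpow: "pot phi f ((phi ^^ n) \<omega>) m = pot phi f \<omega> (m + n)"
  by (simp add: pot_def funpow_add)

lemma step_mat_funpow: "step_mat phi f m ((phi ^^ n) \<omega>) E = step_mat phi f (m + n) \<omega> E"
  unfolding step_mat_def pot_funpow ..

lemma transfer_cocycle:
  "transfer phi f (n + m) \<omega> E = transfer phi f m ((phi ^^ n) \<omega>) E ** transfer phi f n \<omega> E"
proof (induction m)
  case 0
  then show ?case by (simp add: matrix_mul_lid)
next
  case (Suc m)
  have "step_mat phi f (Suc (n + m)) \<omega> E = step_mat phi f (Suc m) ((phi ^^ n) \<omega>) E"
    by (simp add: step_mat_funpow add.commute)
  then show ?case
    by (simp add: Suc.IH matrix_mul_assoc)
qed

lemma opnorm_step_mat_le: "opnorm (step_mat phi f n \<omega> E) \<le> \<bar>pot phi f \<omega> n - E\<bar> + 2"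
  using opnorm_le_sum_abs_entries[of "step_mat phi f n \<omega> E"] by (simp add: step_mat_def)

lemma opnorm_step_mat_diff_le:
  "opnorm (step_mat phi f n \<omega> E - step_mat phi f n \<omega> E') \<le> \<bar>E - E'\<bar>"
  using opnorm_le_sum_abs_entries[of "step_mat phi f n \<omega> E - step_mat phi f n \<omega> E'"]
  by (simp add: step_mat_def abs_minus_commute)

lemma opnorm_transfer_le_power:
  assumes "\<And>i. \<bar>pot phi f \<omega> i - E\<bar> + 2 \<le> K"
  shows "opnorm (transfer phi f n \<omega> E) \<le> K ^ n"
proof (induction n)
  case 0
  then show ?case by (simp add: opnorm_mat_1)
next
  case (Suc n)
  have "opnorm (transfer phi f (Suc n) \<omega> E)
      \<le> opnorm (step_mat phi f (Suc n) \<omega> E) * opnorm (transfer phi f n \<omega> E)"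
    by (simp add: opnorm_mult_le)
  also have "\<dots> \<le> K * K ^ n"
    using assms[of 0] by (intro mult_mono Suc opnorm_nonneg order.trans[OF opnorm_step_mat_le assms]) simp
  finally show ?case by simp
qed

lemma opnorm_transfer_diff_le:
  assumes K: "\<And>i. \<bar>pot phi f \<omega> i - E\<bar> + 2 \<le> K" "\<And>i. \<bar>pot phi f \<omega> i - E'\<bar> + 2 \<le> K"
  shows "opnorm (transfer phi f n \<omega> E - transfer phi f n \<omega> E') \<le> n * K ^ n * \<bar>E - E'\<bar>"
proof (induction n)
  case 0
  then show ?case by (simp add: opnorm_def onorm_zero)
next
  case (Suc n)
  have K1: "1 \<le> K" using K(1)[of 0] by simp
  define A where "A = step_mat phi f (Suc n) \<omega> E"
  define A' where "A' = step_mat phi f (Suc n) \<omega> E'"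
  define B where "B = transfer phi f n \<omega> E"
  define B' where "B' = transfer phi f n \<omega> E'"
  have "A ** B - A' ** B' = A ** (B - B') + (A - A') ** B'"
    by (simp add: vec_eq_iff matrix_matrix_mult_def sum_2 algebra_simps)
  then have "opnorm (transfer phi f (Suc n) \<omega> E - transfer phi f (Suc n) \<omega> E')
      = opnorm (A ** (B - B') + (A - A') ** B')"
    by (simp add: A_def A'_def B_def B'_def)
  also have "\<dots> \<le> opnorm A * opnorm (B - B') + opnorm (A - A') * opnorm B'"
    by (rule order.trans[OF opnorm_add_le add_mono[OF opnorm_mult_le opnorm_mult_le]])
  also have "\<dots> \<le> K * (n * K ^ n * \<bar>E - E'\<bar>) + \<bar>E - E'\<bar> * K ^ n"
  proof (intro add_mono mult_mono)
    show "opnorm A \<le> K"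
      unfolding A_def by (rule order.trans[OF opnorm_step_mat_le K(1)])
    show "opnorm (A - A') \<le> \<bar>E - E'\<bar>"
      unfolding A_def A'_def by (rule opnorm_step_mat_diff_le)
    show "opnorm B' \<le> K ^ n"
      unfolding B'_def by (rule opnorm_transfer_le_power[OF K(2)])
  qed (use Suc K1 in \<open>auto simp: B_def B'_def opnorm_nonneg\<close>)
  also have "\<dots> \<le> Suc n * K ^ Suc n * \<bar>E - E'\<bar>"
  proof -
    have "\<bar>E - E'\<bar> * K ^ n \<le> \<bar>E - E'\<bar> * K ^ Suc n"
      using K1 by (simp add: mult_left_mono)
    then show ?thesis by (simp add: algebra_simps)
  qed
  finally show ?case .
qed

text \<open>For large energies the first column of the transfer matrix grows like a geometric
  sequence, since the diagonal entry dominates the recursion.\<close>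

lemma transfer_entry_growth:
  assumes C: "\<And>i. \<bar>pot phi f \<omega> i\<bar> \<le> C" and E: "C + 2 \<le> \<bar>E\<bar>"
  shows "(\<bar>E\<bar> - C - 1) ^ n \<le> \<bar>transfer phi f n \<omega> E $ 1 $ 1\<bar> \<and>
         \<bar>transfer phi f n \<omega> E $ 2 $ 1\<bar> \<le> \<bar>transfer phi f n \<omega> E $ 1 $ 1\<bar>"
proof (induction n)
  case 0 then show ?case by (simp add: mat_def)
next
  case (Suc n)
  define a where "a = transfer phi f n \<omega> E $ 1 $ 1"
  define b where "b = transfer phi f n \<omega> E $ 2 $ 1"
  define v where "v = pot phi f \<omega> (Suc n)"
  have e1: "transfer phi f (Suc n) \<omega> E $ 1 $ 1 = (v - E) * a - b"
    by (simp add: matrix_matrix_mult_def sum_2 step_mat_def a_def b_def v_def)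
  have e2: "transfer phi f (Suc n) \<omega> E $ 2 $ 1 = a"
    by (simp add: matrix_matrix_mult_def sum_2 step_mat_def a_def b_def v_def)
  have IH: "(\<bar>E\<bar> - C - 1) ^ n \<le> \<bar>a\<bar>" "\<bar>b\<bar> \<le> \<bar>a\<bar>" using Suc unfolding a_def b_def by auto
  have vE: "\<bar>E\<bar> - C \<le> \<bar>v - E\<bar>" using C[of "Suc n"] unfolding v_def by linarith
  have q: "1 \<le> \<bar>E\<bar> - C - 1" using E by simp
  have "(\<bar>E\<bar> - C) * \<bar>a\<bar> \<le> \<bar>v - E\<bar> * \<bar>a\<bar>" using vE by (simp add: mult_right_mono)
  moreover have "\<bar>(v - E) * a\<bar> \<le> \<bar>(v - E) * a - b\<bar> + \<bar>b\<bar>"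
    using abs_triangle_ineq[of "(v - E) * a - b" b] by simp
  moreover have "\<bar>(v - E) * a\<bar> = \<bar>v - E\<bar> * \<bar>a\<bar>" by (rule abs_mult)
  moreover have "(\<bar>E\<bar> - C - 1) * \<bar>a\<bar> = (\<bar>E\<bar> - C) * \<bar>a\<bar> - \<bar>a\<bar>" by algebra
  ultimately have "(\<bar>E\<bar> - C - 1) * \<bar>a\<bar> \<le> \<bar>(v - E) * a - b\<bar>"
    using IH(2) by linarith
  moreover have "(\<bar>E\<bar> - C - 1) ^ Suc n \<le> (\<bar>E\<bar> - C - 1) * \<bar>a\<bar>"
    using IH(1) q by (simp add: mult_left_mono)
  moreover have "\<bar>a\<bar> \<le> (\<bar>E\<bar> - C - 1) * \<bar>a\<bar>"
    using mult_right_mono[OF q, of "\<bar>a\<bar>"] by simp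
  ultimately show ?case unfolding e1 e2 by linarith
qed

lemma opnorm_transfer_growth:
  assumes "\<And>i. \<bar>pot phi f \<omega> i\<bar> \<le> C" and "C + 2 \<le> \<bar>E\<bar>"
  shows "(\<bar>E\<bar> - C - 1) ^ n \<le> opnorm (transfer phi f n \<omega> E)"
  using transfer_entry_growth[OF assms, of n] abs_entry_le_opnorm[of "transfer phi f n \<omega> E" 1 1]
  by linarith

lemma opnorm_transfer_measurable:
  assumes "\<And>n. (\<lambda>x. pot phi f (w x) n) \<in> borel_measurable N" and "e \<in> borel_measurable N"
  shows "(\<lambda>x. opnorm (transfer phi f n (w x) (e x))) \<in> borel_measurable N"
proof -
  have "(\<lambda>x. transfer phi f n (w x) (e x)) \<in> borel_measurable N"
  proof (induction n)
    case 0
    then show ?case by simp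
  next
    case (Suc n)
    have step: "(\<lambda>x. step_mat phi f (Suc n) (w x) (e x) $ i $ j) \<in> borel_measurable N" for i j
      unfolding step_mat_def using assms by simp
    show ?case
    proof (rule matrix_2x2_measurable)
      fix i j
      show "(\<lambda>x. transfer phi f (Suc n) (w x) (e x) $ i $ j) \<in> borel_measurable N"
        by (simp add: matrix_matrix_mult_def sum_2)
          (intro borel_measurable_add borel_measurable_times step matrix_entry_measurable[OF Suc])
    qed
  qed
  then show ?thesis
    by (rule borel_measurable_continuous_on[OF continuous_on_opnorm])
qed

definition log_norm :: "('a \<Rightarrow> 'a) \<Rightarrow> ('a \<Rightarrow> real) \<Rightarrow> nat \<Rightarrow> 'a \<Rightarrow> real \<Rightarrow> real" where
  "log_norm phi f n \<omega> E = ln (opnorm (transfer phi f n \<omega> E))"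

lemma log_norm_nonneg: "0 \<le> log_norm phi f n \<omega> E"
  unfolding log_norm_def using one_le_opnorm_transfer[of phi f n \<omega> E] by simp

lemma log_norm_0: "log_norm phi f 0 \<omega> E = 0"
  by (simp add: log_norm_def opnorm_mat_1)

lemma log_norm_subadditive:
  "log_norm phi f (n + m) \<omega> E \<le> log_norm phi f n \<omega> E + log_norm phi f m ((phi ^^ n) \<omega>) E"
proof -
  have "opnorm (transfer phi f (n + m) \<omega> E)
      \<le> opnorm (transfer phi f m ((phi ^^ n) \<omega>) E) * opnorm (transfer phi f n \<omega> E)"
    by (simp add: transfer_cocycle opnorm_mult_le)
  then have "ln (opnorm (transfer phi f (n + m) \<omega> E))
      \<le> ln (opnorm (transfer phi f m ((phi ^^ n) \<omega>) E) * opnorm (transfer phi f n \<omega> E))"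
    using opnorm_transfer_pos by (subst ln_le_cancel_iff) (auto intro!: mult_pos_pos)
  then show ?thesis
    unfolding log_norm_def
    using opnorm_transfer_pos[of phi f m "(phi ^^ n) \<omega>" E] opnorm_transfer_pos[of phi f n \<omega> E]
    by (simp add: ln_mult)
qed

lemma log_norm_le:
  assumes "\<And>i. \<bar>pot phi f \<omega> i - E\<bar> + 2 \<le> K"
  shows "log_norm phi f n \<omega> E \<le> n * ln K"
proof -
  have "1 \<le> K" using assms[of 0] by simp
  moreover have "log_norm phi f n \<omega> E \<le> ln (K ^ n)"
    unfolding log_norm_def using opnorm_transfer_le_power[OF assms] opnorm_transfer_pos \<open>1 \<le> K\<close>
    by (subst ln_le_cancel_iff) auto
  ultimately show ?thesis by (simp add: ln_realpow)
qed

lemma ln_add_le: "1 \<le> (y::real) \<Longrightarrow> 0 \<le> d \<Longrightarrow> ln (y + d) \<le> ln y + d"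
proof -
  assume y: "1 \<le> y" and d: "0 \<le> d"
  have "ln (y + d) = ln (y * (1 + d / y))"
    using y by (simp add: distrib_left)
  also have "ln (y * (1 + d / y)) = ln y + ln (1 + d / y)"
    using y d by (intro ln_mult_pos) (auto intro: add_pos_nonneg)
  finally have "ln (y + d) = ln y + ln (1 + d / y)" .
  also have "ln (1 + d / y) \<le> d / y"
    using y d by (intro ln_add_one_self_le_self) auto
  also have "d / y \<le> d"
    using y d by (simp add: divide_le_eq mult_le_cancel_left1 mult_left_mono[of 1 y d])
  finally show ?thesis by simp
qed

lemma log_norm_lipschitz:
  assumes "\<And>i. \<bar>pot phi f \<omega> i - E\<bar> + 2 \<le> K" "\<And>i. \<bar>pot phi f \<omega> i - E'\<bar> + 2 \<le> K"
  shows "log_norm phi f n \<omega> E \<le> log_norm phi f n \<omega> E' + n * K ^ n * \<bar>E - E'\<bar>"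
proof -
  define d where "d = n * K ^ n * \<bar>E - E'\<bar>"
  have d: "0 \<le> d" using assms(1)[of 0] unfolding d_def by simp
  have "opnorm (transfer phi f n \<omega> E) \<le> opnorm (transfer phi f n \<omega> E') + d"
    using opnorm_add_le[of "transfer phi f n \<omega> E - transfer phi f n \<omega> E'" "transfer phi f n \<omega> E'"]
      opnorm_transfer_diff_le[OF assms, of n] unfolding d_def by simp
  then have "log_norm phi f n \<omega> E \<le> ln (opnorm (transfer phi f n \<omega> E') + d)"
    unfolding log_norm_def using d opnorm_transfer_pos[of phi f n \<omega> E] by simp
  also have "\<dots> \<le> log_norm phi f n \<omega> E' + d"
    unfolding log_norm_def by (rule ln_add_le[OF one_le_opnorm_transfer d])
  finally show ?thesis unfolding d_def .
qed

lemma log_norm_block_bound: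
  assumes K: "\<And>i j. \<bar>pot phi f ((phi ^^ j) \<omega>) i - E\<bar> + 2 \<le> K" and k: "0 < k"
  shows "k * log_norm phi f N \<omega> E
    \<le> (\<Sum>i<N. log_norm phi f k ((phi ^^ i) \<omega>) E) + 2 * (real k)\<^sup>2 * ln K"
proof -
  have "k * log_norm phi f N ((phi ^^ 0) \<omega>) E
      \<le> (\<Sum>i<N. log_norm phi f k ((phi ^^ i) \<omega>) E) + 2 * (real k)\<^sup>2 * ln K"
  proof (rule subadditive_block_bound[where l="\<lambda>n j. log_norm phi f n ((phi ^^ j) \<omega>) E"])
    show "log_norm phi f (n + m) ((phi ^^ j) \<omega>) E
        \<le> log_norm phi f n ((phi ^^ j) \<omega>) E + log_norm phi f m ((phi ^^ (j + n)) \<omega>) E" for n m j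
      using log_norm_subadditive[of phi f n m "(phi ^^ j) \<omega>" E]
      by (metis add.commute comp_apply funpow_add)
    show "log_norm phi f n ((phi ^^ j) \<omega>) E \<le> n * ln K" for n j
      by (rule log_norm_le[OF K])
  qed (use k log_norm_nonneg in auto)
  then show ?thesis by simp
qed

lemma log_norm_le_if_birkhoff_bound:
  assumes K: "\<And>i j. \<bar>pot phi f ((phi ^^ j) \<omega>) i - E\<bar> + 2 \<le> K"
      "\<And>i j. \<bar>pot phi f ((phi ^^ j) \<omega>) i - E0\<bar> + 2 \<le> K"
    and k: "0 < k"
    and birkhoff: "\<And>N. (\<Sum>i<N. log_norm phi f k ((phi ^^ i) \<omega>) E0) \<le> N * a + B"
  shows "log_norm phi f N \<omega> E \<le> N * (a / k + K ^ k * \<bar>E - E0\<bar>) + (B + 2 * (real k)\<^sup>2 * ln K) / k"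
proof -
  have "k * log_norm phi f N \<omega> E
      \<le> (\<Sum>i<N. log_norm phi f k ((phi ^^ i) \<omega>) E) + 2 * (real k)\<^sup>2 * ln K"
    by (rule log_norm_block_bound[OF K(1) k])
  also have "(\<Sum>i<N. log_norm phi f k ((phi ^^ i) \<omega>) E)
      \<le> (\<Sum>i<N. log_norm phi f k ((phi ^^ i) \<omega>) E0 + k * K ^ k * \<bar>E - E0\<bar>)"
    by (intro sum_mono log_norm_lipschitz K)
  also have "\<dots> \<le> N * a + B + N * (k * K ^ k * \<bar>E - E0\<bar>)"
    using birkhoff[of N] by (simp add: sum.distrib)
  also have "\<dots> + 2 * (real k)\<^sup>2 * ln K
      = k * (N * (a / k + K ^ k * \<bar>E - E0\<bar>) + (B + 2 * (real k)\<^sup>2 * ln K) / k)"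
    using k by (simp add: field_simps)
  finally show ?thesis
    using k by (simp add: mult_le_cancel_left_pos)
qed

lemma inverse_square_le_if_linear_growth:
  fixes x e R :: real
  assumes R: "2 \<le> R" and x: "1 \<le> x" and growth: "R \<le> \<bar>e\<bar> \<Longrightarrow> \<bar>e\<bar> / R \<le> x"
  shows "1 / x\<^sup>2 \<le> (2 * R\<^sup>2 + 1) * inverse (1 + e\<^sup>2)"
proof -
  have "1 \<le> x\<^sup>2" using x by simp
  have "1 + e\<^sup>2 \<le> (2 * R\<^sup>2 + 1) * x\<^sup>2"
  proof (cases "R \<le> \<bar>e\<bar>")
    case True
    then have "\<bar>e\<bar> \<le> R * x"
      using growth R by (simp add: pos_divide_le_eq mult.commute)
    then have "e\<^sup>2 \<le> R\<^sup>2 * x\<^sup>2"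
      using power_mono[of "\<bar>e\<bar>" "R * x" 2] by (simp add: power_mult_distrib)
    moreover have "1 \<le> e\<^sup>2"
      using True R by (metis abs_ge_self one_le_power order.trans one_le_numeral power2_abs)
    ultimately show ?thesis
      using \<open>1 \<le> x\<^sup>2\<close> by (simp add: algebra_simps)
  next
    case False
    then have "e\<^sup>2 \<le> R\<^sup>2"
      using R by (simp add: abs_le_square_iff[symmetric])
    moreover have "(2 * R\<^sup>2 + 1) * 1 \<le> (2 * R\<^sup>2 + 1) * x\<^sup>2"
      using \<open>1 \<le> x\<^sup>2\<close> by (intro mult_left_mono) auto
    then have "2 * R\<^sup>2 + 1 \<le> (2 * R\<^sup>2 + 1) * x\<^sup>2"
      by simp
    ultimately show ?thesis
      using zero_le_power2[of R] by linarith
  qed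
  moreover have "0 < x\<^sup>2"
    using x by simp
  ultimately have "1 / x\<^sup>2 * (1 + e\<^sup>2) \<le> 2 * R\<^sup>2 + 1"
    by (simp add: pos_divide_le_eq)
  moreover have "0 < 1 + e\<^sup>2"
    by (simp add: add_pos_nonneg)
  ultimately show ?thesis
    by (simp add: divide_inverse[symmetric] pos_le_divide_eq)
qed

lemma inverse_opnorm_transfer_sq_le:
  assumes C: "\<And>i. \<bar>pot phi f \<omega> i\<bar> \<le> C" and N: "1 \<le> N"
  shows "1 / (opnorm (transfer phi f N \<omega> E))\<^sup>2 \<le> (2 * (C + 2)\<^sup>2 + 1) * inverse (1 + E\<^sup>2)"
proof (rule inverse_square_le_if_linear_growth[OF _ one_le_opnorm_transfer])
  have C0: "0 \<le> C" using C[of 0] by simp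
  then show "2 \<le> C + 2" by simp
  assume E: "C + 2 \<le> \<bar>E\<bar>"
  have "\<bar>E\<bar> \<le> (\<bar>E\<bar> - C - 1) * (C + 2)"
    using mult_mono[OF order_refl E, of "C + 1"] C0 E by (simp add: algebra_simps)
  then have "\<bar>E\<bar> / (C + 2) \<le> (\<bar>E\<bar> - C - 1) ^ 1"
    using C0 by (simp add: pos_divide_le_eq)
  also have "\<dots> \<le> (\<bar>E\<bar> - C - 1) ^ N"
    using E N by (intro power_increasing) auto
  also have "\<dots> \<le> opnorm (transfer phi f N \<omega> E)"
    by (rule opnorm_transfer_growth[OF C E])
  finally show "\<bar>E\<bar> / (C + 2) \<le> opnorm (transfer phi f N \<omega> E)" .
qed

lemma integrable_inverse_1_plus_square_lborel:
  "integrable lborel (\<lambda>x::real. inverse (1 + x\<^sup>2))"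
  using integrable_inverse_1_plus_square by (simp add: set_integrable_def einterval_iff)

section \<open>Birkhoff sums\<close>

locale mpt = prob_space M for M :: "'a measure" +
  fixes T :: "'a \<Rightarrow> 'a"
  assumes T_measurable[measurable]: "T \<in> M \<rightarrow>\<^sub>M M"
    and T_preserving: "distr M M T = M"
begin

lemma funpow_T_measurable[measurable]: "(T ^^ n) \<in> M \<rightarrow>\<^sub>M M"
  by (induction n) (simp_all add: measurable_comp)

lemma funpow_T_space: "x \<in> space M \<Longrightarrow> (T ^^ n) x \<in> space M"
  by (rule measurable_space[OF funpow_T_measurable])

lemma integral_T:
  fixes g :: "'a \<Rightarrow> real"
  assumes "g \<in> borel_measurable M"
  shows "(\<integral>x. g (T x) \<partial>M) = (\<integral>x. g x \<partial>M)"
  using integral_distr[of T M M g] assms T_preserving by simp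

lemma integral_funpow_T:
  fixes g :: "'a \<Rightarrow> real"
  assumes [measurable]: "g \<in> borel_measurable M"
  shows "(\<integral>x. g ((T ^^ n) x) \<partial>M) = (\<integral>x. g x \<partial>M)"
proof (induction n)
  case 0
  then show ?case by simp
next
  case (Suc n)
  have "(\<integral>x. g ((T ^^ Suc n) x) \<partial>M) = (\<integral>x. (\<lambda>y. g ((T ^^ n) y)) (T x) \<partial>M)"
    by (simp add: funpow_Suc_right del: funpow.simps)
  also have "\<dots> = (\<integral>x. g ((T ^^ n) x) \<partial>M)"
    by (rule integral_T) measurable
  finally show ?case using Suc by simp
qed

definition birkhoff_sum :: "('a \<Rightarrow> real) \<Rightarrow> nat \<Rightarrow> 'a \<Rightarrow> real" where
  "birkhoff_sum g n x = (\<Sum>i<n. g ((T ^^ i) x))"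

lemma birkhoff_sum_measurable[measurable]:
  "g \<in> borel_measurable M \<Longrightarrow> birkhoff_sum g n \<in> borel_measurable M"
  unfolding birkhoff_sum_def
  by (rule borel_measurable_sum, rule measurable_compose[OF funpow_T_measurable], assumption)

lemma birkhoff_sum_0 [simp]: "birkhoff_sum g 0 x = 0"
  by (simp add: birkhoff_sum_def)

lemma birkhoff_sum_Suc: "birkhoff_sum g (Suc n) x = g x + birkhoff_sum g n (T x)"
  unfolding birkhoff_sum_def sum.lessThan_Suc_shift
  by (simp add: funpow_Suc_right del: funpow.simps)

fun birkhoff_max :: "('a \<Rightarrow> real) \<Rightarrow> nat \<Rightarrow> 'a \<Rightarrow> real" where
  "birkhoff_max g 0 x = 0"
| "birkhoff_max g (Suc n) x = max (birkhoff_max g n x) (birkhoff_sum g (Suc n) x)"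

lemma birkhoff_max_measurable[measurable]:
  assumes [measurable]: "g \<in> borel_measurable M"
  shows "birkhoff_max g n \<in> borel_measurable M"
proof (induction n)
  case 0
  have "birkhoff_max g 0 = (\<lambda>x. 0)" by (rule ext) simp
  then show ?case by simp
next
  case (Suc n)
  have "birkhoff_max g (Suc n) = (\<lambda>x. max (birkhoff_max g n x) (birkhoff_sum g (Suc n) x))"
    by (rule ext) simp
  then show ?case using Suc by simp
qed

lemma birkhoff_max_nonneg: "0 \<le> birkhoff_max g n x"
  by (induction n) auto

lemma birkhoff_sum_le_max: "k \<le> n \<Longrightarrow> birkhoff_sum g k x \<le> birkhoff_max g n x"
proof (induction n)
  case 0
  then show ?case by simp
next
  case (Suc n)
  then show ?case by (cases "k = Suc n") auto
qed

lemma birkhoff_max_attained: "\<exists>k\<le>n. birkhoff_max g n x = birkhoff_sum g k x"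
proof (induction n)
  case 0
  then show ?case by simp
next
  case (Suc n)
  then obtain k where "k \<le> n" "birkhoff_max g n x = birkhoff_sum g k x" by auto
  then show ?case
    by (cases "birkhoff_max g n x \<le> birkhoff_sum g (Suc n) x")
      (auto intro: exI[of _ "Suc n"] exI[of _ k])
qed

lemma abs_birkhoff_max_le:
  assumes "\<And>y. \<bar>g y\<bar> \<le> K"
  shows "\<bar>birkhoff_max g n x\<bar> \<le> n * K"
proof -
  have "\<bar>birkhoff_sum g k x\<bar> \<le> k * K" for k
  proof -
    have "\<bar>birkhoff_sum g k x\<bar> \<le> (\<Sum>i<k. \<bar>g ((T ^^ i) x)\<bar>)"
      unfolding birkhoff_sum_def by (rule sum_abs)
    also have "\<dots> \<le> (\<Sum>i<k. K)" by (intro sum_mono assms)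
    finally show ?thesis by simp
  qed
  moreover obtain k where "k \<le> n" "birkhoff_max g n x = birkhoff_sum g k x"
    using birkhoff_max_attained by blast
  moreover have "0 \<le> K" using assms[of x] by simp
  ultimately show ?thesis
    by (metis mult_right_mono of_nat_le_iff order_trans)
qed

text \<open>Garsia's proof: where the maximum is positive, it is attained by a sum of length at
  least one, so it exceeds the maximum at the image point by at most the first term.\<close>

lemma maximal_ergodic_lemma:
  assumes [measurable]: "g \<in> borel_measurable M" and bound: "\<And>y. \<bar>g y\<bar> \<le> K"
  shows "0 \<le> (\<integral>x. (if 0 < birkhoff_max g n x then g x else 0) \<partial>M)"
proof -
  have K: "0 \<le> K" using bound[of undefined] by simp
  have max_int: "integrable M (birkhoff_max g n)"
    by (rule integrable_const_bound[of _ "n * K"]) (auto intro: abs_birkhoff_max_le bound)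
  have max_T_int: "integrable M (\<lambda>x. birkhoff_max g n (T x))"
    by (rule integrable_const_bound[of _ "n * K"]) (auto intro: abs_birkhoff_max_le bound)
  have int: "integrable M (\<lambda>x. if 0 < birkhoff_max g n x then g x else 0)"
    by (rule integrable_const_bound[of _ K]) (auto intro: bound K)
  have pointwise: "birkhoff_max g n x - birkhoff_max g n (T x)
      \<le> (if 0 < birkhoff_max g n x then g x else 0)" for x
  proof (cases "0 < birkhoff_max g n x")
    case True
    obtain k where k: "k \<le> n" "birkhoff_max g n x = birkhoff_sum g k x"
      using birkhoff_max_attained by blast
    with True obtain j where j: "k = Suc j" by (cases k) auto
    have "birkhoff_max g n x = g x + birkhoff_sum g j (T x)"
      using k j by (simp add: birkhoff_sum_Suc)
    also have "birkhoff_sum g j (T x) \<le> birkhoff_max g n (T x)"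
      using birkhoff_sum_le_max[of j n] k j by simp
    finally show ?thesis using True by simp
  next
    case False
    then show ?thesis using birkhoff_max_nonneg[of g n "T x"] by simp
  qed
  have "(\<integral>x. birkhoff_max g n x - birkhoff_max g n (T x) \<partial>M) = 0"
    using max_int max_T_int integral_T[of "birkhoff_max g n"] by simp
  moreover have "(\<integral>x. birkhoff_max g n x - birkhoff_max g n (T x) \<partial>M)
      \<le> (\<integral>x. (if 0 < birkhoff_max g n x then g x else 0) \<partial>M)"
    using max_int max_T_int int pointwise by (intro integral_mono) auto
  ultimately show ?thesis by simp
qed

lemma integral_where_some_birkhoff_sum_pos_nonneg:
  assumes [measurable]: "g \<in> borel_measurable M" and bound: "\<And>y. \<bar>g y\<bar> \<le> K"
  shows "0 \<le> (\<integral>x. (if \<exists>n. 0 < birkhoff_sum g n x then g x else 0) \<partial>M)"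
proof -
  have K: "0 \<le> K" using bound[of undefined] by simp
  define s where "s n x = (if 0 < birkhoff_max g n x then g x else 0)" for n x
  have [measurable]: "s n \<in> borel_measurable M" for n
    unfolding s_def by measurable
  have "(\<lambda>n. s n x) \<longlonglongrightarrow> (if \<exists>n. 0 < birkhoff_sum g n x then g x else 0)" for x
  proof (cases "\<exists>n. 0 < birkhoff_sum g n x")
    case True
    then obtain k where k: "0 < birkhoff_sum g k x" by blast
    have "0 < birkhoff_max g n x" if "k \<le> n" for n
      using k birkhoff_sum_le_max[OF that, of g x] by linarith
    then have "eventually (\<lambda>n. s n x = g x) sequentially"
      by (auto simp: s_def eventually_sequentially)
    then show ?thesis
      using True by (simp add: tendsto_eventually)
  next
    case False
    have "s n x = 0" for n
    proof -
      obtain k where "birkhoff_max g n x = birkhoff_sum g k x"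
        using birkhoff_max_attained by blast
      then show ?thesis using False by (simp add: s_def)
    qed
    then show ?thesis using False by simp
  qed
  then have "(\<lambda>n. \<integral>x. s n x \<partial>M) \<longlonglongrightarrow> (\<integral>x. (if \<exists>n. 0 < birkhoff_sum g n x then g x else 0) \<partial>M)"
    using bound K by (intro integral_dominated_convergence[where w="\<lambda>x. K"]) (auto simp: s_def)
  moreover have "0 \<le> (\<integral>x. s n x \<partial>M)" for n
    unfolding s_def by (rule maximal_ergodic_lemma[OF _ bound]) measurable
  ultimately show ?thesis
    by (intro LIMSEQ_le_const) auto
qed

lemma unbounded_birkhoff_sums_invariant:
  "(\<forall>B::nat. \<exists>n. real B < birkhoff_sum g n (T x)) \<longleftrightarrow> (\<forall>B::nat. \<exists>n. real B < birkhoff_sum g n x)"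
proof
  assume unbdd: "\<forall>B::nat. \<exists>n. real B < birkhoff_sum g n (T x)"
  show "\<forall>B::nat. \<exists>n. real B < birkhoff_sum g n x"
  proof
    fix B :: nat
    obtain n where "real (B + nat \<lceil>\<bar>g x\<bar>\<rceil>) < birkhoff_sum g n (T x)"
      using unbdd by blast
    then have "real B < g x + birkhoff_sum g n (T x)"
      by linarith
    then show "\<exists>n. real B < birkhoff_sum g n x"
      by (metis birkhoff_sum_Suc)
  qed
next
  assume unbdd: "\<forall>B::nat. \<exists>n. real B < birkhoff_sum g n x"
  show "\<forall>B::nat. \<exists>n. real B < birkhoff_sum g n (T x)"
  proof
    fix B :: nat
    obtain n where n: "real (B + nat \<lceil>\<bar>g x\<bar>\<rceil>) < birkhoff_sum g n x"
      using unbdd by blast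
    moreover have "n \<noteq> 0"
      using n by (metis birkhoff_sum_0 of_nat_0_le_iff not_less)
    then obtain m where "n = Suc m"
      by (cases n) auto
    ultimately have "real B < birkhoff_sum g m (T x)"
      by (simp add: birkhoff_sum_Suc) linarith
    then show "\<exists>n. real B < birkhoff_sum g n (T x)" ..
  qed
qed

lemma unbounded_birkhoff_sums_funpow_invariant:
  "(\<forall>B::nat. \<exists>n. real B < birkhoff_sum g n ((T ^^ i) x)) \<longleftrightarrow> (\<forall>B::nat. \<exists>n. real B < birkhoff_sum g n x)"
  by (induction i) (simp_all add: unbounded_birkhoff_sums_invariant)

text \<open>On the set where the Birkhoff sums are unbounded above, every point has some positive
  Birkhoff sum, so the maximal ergodic lemma applies to the restriction of \<open>g\<close> to that set.\<close>

lemma integral_on_unbounded_birkhoff_sums_nonneg: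
  fixes g :: "'a \<Rightarrow> real"
  assumes [measurable]: "g \<in> borel_measurable M" and bound: "\<And>y. \<bar>g y\<bar> \<le> K"
  defines "D \<equiv> {x\<in>space M. \<forall>B::nat. \<exists>n. real B < birkhoff_sum g n x}"
  shows "0 \<le> (\<integral>x. (if x \<in> D then g x else 0) \<partial>M)"
proof -
  define G where "G x = (if x \<in> D then g x else 0)" for x
  have [measurable]: "D \<in> sets M"
    unfolding D_def by measurable
  have [measurable]: "G \<in> borel_measurable M"
    unfolding G_def by measurable
  have "\<bar>G y\<bar> \<le> K" for y
    using bound[of y] by (auto simp: G_def)
  then have "0 \<le> (\<integral>x. (if \<exists>n. 0 < birkhoff_sum G n x then G x else 0) \<partial>M)"
    by (intro integral_where_some_birkhoff_sum_pos_nonneg) auto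
  also have "(\<integral>x. (if \<exists>n. 0 < birkhoff_sum G n x then G x else 0) \<partial>M) = (\<integral>x. G x \<partial>M)"
  proof (rule Bochner_Integration.integral_cong[OF refl])
    fix x assume x: "x \<in> space M"
    have D_funpow: "(T ^^ i) x \<in> D \<longleftrightarrow> x \<in> D" for i
      using funpow_T_space[OF x, of i] x by (simp add: D_def unbounded_birkhoff_sums_funpow_invariant)
    show "(if \<exists>n. 0 < birkhoff_sum G n x then G x else 0) = G x"
    proof (cases "x \<in> D")
      case True
      then have "\<exists>n. real 0 < birkhoff_sum g n x"
        unfolding D_def by blast
      then obtain n where "0 < birkhoff_sum g n x"
        by auto
      moreover have "birkhoff_sum G n x = birkhoff_sum g n x"
        unfolding birkhoff_sum_def G_def using D_funpow True by simp
      ultimately have "0 < birkhoff_sum G n x"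
        by simp
      then show ?thesis by auto
    qed (simp add: G_def)
  qed
  finally show ?thesis
    unfolding G_def .
qed

end

locale ergodic_mpt = mpt +
  assumes ergodic: "\<forall>A\<in>sets M. T -` A \<inter> space M = A \<longrightarrow> measure M A = 0 \<or> measure M A = 1"
begin

text \<open>The set where the Birkhoff sums are unbounded above is invariant, hence null or conull;
  it cannot be conull when the integral is negative, since the integral over it is nonnegative.\<close>

lemma birkhoff_sums_bounded_if_integral_neg:
  fixes g :: "'a \<Rightarrow> real"
  assumes [measurable]: "g \<in> borel_measurable M" and bound: "\<And>y. \<bar>g y\<bar> \<le> K"
    and neg: "(\<integral>x. g x \<partial>M) < 0"
  shows "AE x in M. \<exists>B. \<forall>n. birkhoff_sum g n x \<le> B"
proof -
  define D where "D = {x\<in>space M. \<forall>B::nat. \<exists>n. real B < birkhoff_sum g n x}"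
  have [measurable]: "D \<in> sets M"
    unfolding D_def by measurable
  have "T -` D \<inter> space M = D"
    using measurable_space[OF T_measurable] by (auto simp: D_def unbounded_birkhoff_sums_invariant)
  then have D_01: "measure M D = 0 \<or> measure M D = 1"
    using ergodic by simp
  have "measure M D \<noteq> 1"
  proof
    assume "measure M D = 1"
    then have "AE x in M. x \<in> D"
      by (metis AE_prob_1 \<open>D \<in> sets M\<close>)
    then have "(\<integral>x. (if x \<in> D then g x else 0) \<partial>M) = (\<integral>x. g x \<partial>M)"
      by (intro integral_cong_AE) auto
    then show False
      using integral_on_unbounded_birkhoff_sums_nonneg[OF assms(1) bound] neg by (simp add: D_def)
  qed
  with D_01 have "AE x in M. x \<notin> D"
    by (intro AE_I'[of D]) (auto simp: emeasure_eq_measure)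
  then show ?thesis
  proof (rule AE_mp, intro AE_I2 impI)
    fix x assume "x \<in> space M" "x \<notin> D"
    then obtain B :: nat where "\<forall>n. birkhoff_sum g n x \<le> real B"
      unfolding D_def by (auto simp: not_less)
    then show "\<exists>B. \<forall>n. birkhoff_sum g n x \<le> B" ..
  qed
qed

lemma birkhoff_sum_upper_bound:
  fixes h :: "'a \<Rightarrow> real"
  assumes [measurable]: "h \<in> borel_measurable M" and bound: "\<And>y. \<bar>h y\<bar> \<le> K" and "0 < \<epsilon>"
  shows "AE x in M. \<exists>B. \<forall>n. birkhoff_sum h n x \<le> n * ((\<integral>y. h y \<partial>M) + \<epsilon>) + B"
proof -
  define c where "c = (\<integral>y. h y \<partial>M) + \<epsilon>"
  have "\<bar>h y - c\<bar> \<le> K + \<bar>c\<bar>" for y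
    using bound[of y] by linarith
  moreover have "(\<integral>y. h y - c \<partial>M) < 0"
    using integrable_const_bound[of h K] bound \<open>0 < \<epsilon>\<close> by (simp add: c_def prob_space)
  ultimately have "AE x in M. \<exists>B. \<forall>n. birkhoff_sum (\<lambda>y. h y - c) n x \<le> B"
    by (intro birkhoff_sums_bounded_if_integral_neg) auto
  then show ?thesis
  proof (rule AE_mp, intro AE_I2 impI)
    fix x assume "\<exists>B. \<forall>n. birkhoff_sum (\<lambda>y. h y - c) n x \<le> B"
    then obtain B where "birkhoff_sum (\<lambda>y. h y - c) n x \<le> B" for n
      by blast
    moreover have "birkhoff_sum (\<lambda>y. h y - c) n x = birkhoff_sum h n x - n * c" for n
      unfolding birkhoff_sum_def by (simp add: sum_subtractf)
    ultimately have "birkhoff_sum h n x \<le> n * c + B" for n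
      by (metis diff_le_eq add.commute)
    then show "\<exists>B. \<forall>n. birkhoff_sum h n x \<le> n * ((\<integral>y. h y \<partial>M) + \<epsilon>) + B"
      unfolding c_def by blast
  qed
qed

end

section \<open>The Lyapunov exponent and the integrals I(N)\<close>

lemma limsup_le_if_le_plus_div:
  fixes x :: "nat \<Rightarrow> real"
  assumes "\<And>N. 1 \<le> N \<Longrightarrow> x N \<le> a + b / N"
  shows "limsup (\<lambda>N. ereal (x N)) \<le> ereal a"
proof -
  have "(\<lambda>N. ereal (a + b / N)) \<longlonglongrightarrow> ereal a"
    using tendsto_add[OF tendsto_const lim_const_over_n[of b]] by (simp add: tendsto_ereal)
  then have "limsup (\<lambda>N. ereal (a + b / N)) = ereal a"
    by (simp add: lim_imp_Limsup)
  moreover have "limsup (\<lambda>N. ereal (x N)) \<le> limsup (\<lambda>N. ereal (a + b / N))"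
    using assms by (intro Limsup_mono) (auto simp: eventually_sequentially intro!: exI[of _ 1])
  ultimately show ?thesis by simp
qed

lemma liminf_ge_if_plus_div_le:
  fixes x :: "nat \<Rightarrow> real"
  assumes "\<And>N. 1 \<le> N \<Longrightarrow> a + b / N \<le> x N"
  shows "ereal a \<le> liminf (\<lambda>N. ereal (x N))"
proof -
  have "(\<lambda>N. ereal (a + b / N)) \<longlonglongrightarrow> ereal a"
    using tendsto_add[OF tendsto_const lim_const_over_n[of b]] by (simp add: tendsto_ereal)
  then have "liminf (\<lambda>N. ereal (a + b / N)) = ereal a"
    by (simp add: lim_imp_Liminf)
  moreover have "liminf (\<lambda>N. ereal (a + b / N)) \<le> liminf (\<lambda>N. ereal (x N))"
    using assms by (intro Liminf_mono) (auto simp: eventually_sequentially intro!: exI[of _ 1])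
  ultimately show ?thesis by simp
qed

locale schroedinger_cocycle = mpt M T for M :: "'a measure" and T +
  fixes f :: "'a \<Rightarrow> real" and C :: real
  assumes f_measurable[measurable]: "f \<in> borel_measurable M"
    and f_bounded: "\<And>x. x \<in> space M \<Longrightarrow> \<bar>f x\<bar> \<le> C"
begin

lemma pot_bounded: "x \<in> space M \<Longrightarrow> \<bar>pot T f x i\<bar> \<le> C"
  unfolding pot_def by (intro f_bounded funpow_T_space)

lemma C_nonneg: "0 \<le> C"
proof -
  obtain x where "x \<in> space M" using not_empty by blast
  then show ?thesis using pot_bounded[of x 0] by simp
qed

lemma pot_bounded_shifted:
  "x \<in> space M \<Longrightarrow> \<bar>E - E0\<bar> \<le> 1 \<Longrightarrow> \<bar>pot T f ((T ^^ j) x) i - E\<bar> + 2 \<le> C + \<bar>E0\<bar> + 3"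
  using pot_bounded[OF funpow_T_space, of x j i] by linarith

lemma pot_measurable[measurable]: "(\<lambda>x. pot T f x n) \<in> borel_measurable M"
  unfolding pot_def by measurable

lemma log_norm_measurable[measurable]: "(\<lambda>x. log_norm T f n x E) \<in> borel_measurable M"
  unfolding log_norm_def
  by (intro borel_measurable_ln opnorm_transfer_measurable[where w="\<lambda>x. x"]) simp_all

lemma abs_log_norm_le:
  assumes "x \<in> space M"
  shows "\<bar>log_norm T f n x E\<bar> \<le> n * ln (C + \<bar>E\<bar> + 2)"
proof -
  have "\<bar>pot T f x i - E\<bar> + 2 \<le> C + \<bar>E\<bar> + 2" for i
    using pot_bounded[OF assms, of i] by linarith
  then show ?thesis
    using log_norm_le log_norm_nonneg[of T f n x E] by (metis abs_of_nonneg)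
qed

lemma integrable_log_norm: "integrable M (\<lambda>x. log_norm T f n x E)"
  by (rule integrable_const_bound[of _ "n * ln (C + \<bar>E\<bar> + 2)"]) (auto intro!: AE_I2 abs_log_norm_le)

definition avg_log_norm :: "nat \<Rightarrow> real \<Rightarrow> real" where
  "avg_log_norm n E = (\<integral>x. log_norm T f n x E \<partial>M)"

lemma avg_log_norm_subadditive: "avg_log_norm (n + m) E \<le> avg_log_norm n E + avg_log_norm m E"
proof -
  have shifted_int: "integrable M (\<lambda>x. log_norm T f m ((T ^^ n) x) E)"
    by (rule integrable_const_bound[of _ "m * ln (C + \<bar>E\<bar> + 2)"])
      (auto intro!: AE_I2 abs_log_norm_le funpow_T_space)
  have "avg_log_norm (n + m) E \<le> (\<integral>x. log_norm T f n x E + log_norm T f m ((T ^^ n) x) E \<partial>M)"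
    unfolding avg_log_norm_def
    by (intro integral_mono integrable_log_norm Bochner_Integration.integrable_add shifted_int
        log_norm_subadditive)
  also have "\<dots> = avg_log_norm n E + (\<integral>x. log_norm T f m ((T ^^ n) x) E \<partial>M)"
    unfolding avg_log_norm_def by (intro Bochner_Integration.integral_add integrable_log_norm shifted_int)
  also have "(\<integral>x. log_norm T f m ((T ^^ n) x) E \<partial>M) = avg_log_norm m E"
    unfolding avg_log_norm_def by (rule integral_funpow_T) measurable
  finally show ?thesis .
qed

lemma avg_log_norm_nonneg: "0 \<le> avg_log_norm n E"
  unfolding avg_log_norm_def by (intro integral_nonneg_AE AE_I2 log_norm_nonneg)

lemma lyap_eq_INF: "lyap M T f E = (INF n\<in>{1..}. avg_log_norm n E / n)"
proof -
  have "(\<lambda>n. avg_log_norm n E / n) \<longlonglongrightarrow> (INF n\<in>{1..}. avg_log_norm n E / n)"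
    by (intro subadditive_tendsto_Inf avg_log_norm_subadditive avg_log_norm_nonneg)
      (simp add: avg_log_norm_def log_norm_0)
  then show ?thesis
    unfolding lyap_def by (simp add: avg_log_norm_def log_norm_def limI)
qed

lemma lyap_approx:
  assumes "0 < \<epsilon>"
  shows "\<exists>k\<ge>1. avg_log_norm k E / k < lyap M T f E + \<epsilon>"
proof -
  have "bdd_below ((\<lambda>n. avg_log_norm n E / n) ` {1..})"
    by (rule bdd_belowI[of _ 0]) (auto intro: avg_log_norm_nonneg divide_nonneg_nonneg)
  moreover have "(INF n\<in>{1..}. avg_log_norm n E / n) < lyap M T f E + \<epsilon>"
    using assms lyap_eq_INF by simp
  ultimately show ?thesis
    by (subst (asm) cINF_less_iff) auto
qed

lemma ln_le_lyap:
  assumes E: "C + 2 \<le> \<bar>E\<bar>"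
  shows "ln (\<bar>E\<bar> - C - 1) \<le> lyap M T f E"
  unfolding lyap_eq_INF
proof (rule cINF_greatest)
  fix n :: nat assume n: "n \<in> {1..}"
  have "n * ln (\<bar>E\<bar> - C - 1) \<le> log_norm T f n x E" if "x \<in> space M" for x
  proof -
    have "ln ((\<bar>E\<bar> - C - 1) ^ n) \<le> log_norm T f n x E"
      unfolding log_norm_def using E opnorm_transfer_growth[OF pot_bounded[OF that] E, of n]
      by (subst ln_le_cancel_iff) (auto simp: opnorm_transfer_pos)
    then show ?thesis using E by (simp add: ln_realpow)
  qed
  then have "n * ln (\<bar>E\<bar> - C - 1) \<le> avg_log_norm n E"
    unfolding avg_log_norm_def
    using integral_mono[OF _ integrable_log_norm, of "\<lambda>_. n * ln (\<bar>E\<bar> - C - 1)"] by (simp add: prob_space)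
  then show "ln (\<bar>E\<bar> - C - 1) \<le> avg_log_norm n E / n"
    using n by (simp add: field_simps)
qed simp

text \<open>Since \<open>L(E) \<ge> log (|E| - C - 1)\<close>, the minimum over a large compact interval is global.\<close>

lemma lyap_attains_min:
  assumes "continuous_on UNIV (lyap M T f)"
  shows "\<exists>E0. \<forall>E. lyap M T f E0 \<le> lyap M T f E"
proof -
  define R where "R = C + 2 + exp (lyap M T f 0)"
  have "0 \<le> R" unfolding R_def using C_nonneg by (simp add: add_nonneg_nonneg)
  then obtain E0 where E0: "E0 \<in> {-R..R}" "\<forall>E\<in>{-R..R}. lyap M T f E0 \<le> lyap M T f E"
    using continuous_attains_inf[of "{-R..R}" "lyap M T f"] continuous_on_subset[OF assms] by auto
  have "lyap M T f E0 \<le> lyap M T f E" for E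
  proof (cases "E \<in> {-R..R}")
    case False
    then have "R \<le> \<bar>E\<bar>" by auto
    then have "exp (lyap M T f 0) \<le> \<bar>E\<bar> - C - 1" "C + 2 \<le> \<bar>E\<bar>"
      unfolding R_def using exp_gt_zero[of "lyap M T f 0"] by linarith+
    then have "lyap M T f 0 \<le> lyap M T f E"
      using ln_le_lyap by (metis exp_gt_zero exp_le_cancel_iff exp_ln order.strict_trans2 order.trans)
    moreover have "lyap M T f E0 \<le> lyap M T f 0"
      using E0 \<open>0 \<le> R\<close> by auto
    ultimately show ?thesis by linarith
  qed (use E0 in auto)
  then show ?thesis by blast
qed

lemma opnorm_transfer_measurable_energy:
  "(\<lambda>E. opnorm (transfer T f N x E)) \<in> borel_measurable lborel"
  by (rule opnorm_transfer_measurable[where w="\<lambda>_. x" and e="\<lambda>E. E"]) simp_all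

lemma integrable_inverse_opnorm_transfer_sq:
  assumes "x \<in> space M" and "1 \<le> N"
  shows "integrable lborel (\<lambda>E. 1 / (opnorm (transfer T f N x E))\<^sup>2)"
proof (rule Bochner_Integration.integrable_bound)
  show "integrable lborel (\<lambda>E. (2 * (C + 2)\<^sup>2 + 1) * inverse (1 + E\<^sup>2))"
    by (intro integrable_mult_right integrable_inverse_1_plus_square_lborel)
  show "AE E in lborel. norm (1 / (opnorm (transfer T f N x E))\<^sup>2)
      \<le> norm ((2 * (C + 2)\<^sup>2 + 1) * inverse (1 + E\<^sup>2))"
    using inverse_opnorm_transfer_sq_le[OF pot_bounded[OF assms(1)] assms(2)]
    by (intro AE_I2) (simp add: add_pos_nonneg)
qed (use opnorm_transfer_measurable_energy in measurable)

lemma Iint_nonneg: "0 \<le> Iint T f N x"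
  unfolding Iint_def by (intro integral_nonneg_AE AE_I2) simp

lemma Iint_le:
  assumes "x \<in> space M" and "1 \<le> N"
  shows "Iint T f N x \<le> (2 * (C + 2)\<^sup>2 + 1) * (\<integral>E. inverse (1 + E\<^sup>2) \<partial>lborel)"
  unfolding Iint_def integral_mult_right_zero[symmetric]
  using inverse_opnorm_transfer_sq_le[OF pot_bounded[OF assms(1)] assms(2)]
  by (intro integral_mono integrable_inverse_opnorm_transfer_sq assms integrable_mult_right
      integrable_inverse_1_plus_square_lborel)

lemma Iint_ge:
  assumes x: "x \<in> space M" and N: "1 \<le> N" and "0 < \<delta>"
    and bound: "\<And>E. \<bar>E - E0\<bar> \<le> \<delta> \<Longrightarrow> log_norm T f N x E \<le> U"
  shows "2 * \<delta> * exp (- 2 * U) \<le> Iint T f N x"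
proof -
  let ?J = "{E0 - \<delta> .. E0 + \<delta>}"
  have "exp (- 2 * U) * indicator ?J E \<le> 1 / (opnorm (transfer T f N x E))\<^sup>2" for E
  proof (cases "E \<in> ?J")
    case True
    then have "log_norm T f N x E \<le> U"
      by (intro bound) auto
    moreover have "opnorm (transfer T f N x E) = exp (log_norm T f N x E)"
      unfolding log_norm_def using opnorm_transfer_pos[of T f N x E] by simp
    ultimately have "(opnorm (transfer T f N x E))\<^sup>2 \<le> exp (2 * U)"
      by (simp add: power2_eq_square exp_add[symmetric])
    then have "exp (- 2 * U) \<le> 1 / (opnorm (transfer T f N x E))\<^sup>2"
      using opnorm_transfer_pos[of T f N x E] by (simp add: exp_minus field_simps)
    then show ?thesis using True by simp
  qed simp
  then have "(\<integral>E. exp (- 2 * U) * indicator ?J E \<partial>lborel) \<le> Iint T f N x"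
    unfolding Iint_def
    by (intro integral_mono integrable_inverse_opnorm_transfer_sq x N integrable_mult_right
        integrable_real_indicator) (auto simp: emeasure_lborel_Icc_eq)
  then show ?thesis
    using \<open>0 < \<delta>\<close> by (simp add: mult.commute mult.left_commute)
qed

lemma liminf_neg_log_Iint_nonneg:
  assumes "x \<in> space M"
  shows "0 \<le> liminf (\<lambda>N. ereal (- (1 / real N) * ln (Iint T f N x)))"
proof -
  define m where "m = max 0 (ln ((2 * (C + 2)\<^sup>2 + 1) * (\<integral>E. inverse (1 + E\<^sup>2) \<partial>lborel)))"
  have "ln (Iint T f N x) \<le> m" if "1 \<le> N" for N
  proof (cases "Iint T f N x = 0")
    case False
    then have "0 < Iint T f N x"
      using Iint_nonneg[of N x] by simp
    then show ?thesis
      using ln_mono[OF Iint_le[OF assms that]] by (simp add: m_def)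
  qed (simp add: m_def)
  then have "0 + - m / N \<le> - (1 / real N) * ln (Iint T f N x)" if "1 \<le> N" for N
    using divide_right_mono[of "ln (Iint T f N x)" m "real N"] that by simp
  then show ?thesis
    using liminf_ge_if_plus_div_le[of 0 "- m"] by (simp add: zero_ereal_def)
qed

end

locale ergodic_schroedinger_cocycle = schroedinger_cocycle M T f C + ergodic_mpt M T
  for M :: "'a measure" and T f C
begin

lemma AE_birkhoff_sum_log_norm_le:
  assumes "0 < \<epsilon>"
  shows "AE x in M. \<exists>B. \<forall>N. (\<Sum>i<N. log_norm T f k ((T ^^ i) x) E) \<le> N * (avg_log_norm k E + \<epsilon>) + B"
proof -
  define h where "h x = (if x \<in> space M then log_norm T f k x E else 0)" for x
  have [measurable]: "h \<in> borel_measurable M"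
    by (rule measurable_cong[THEN iffD1, OF _ log_norm_measurable[of k E]]) (simp add: h_def)
  have "\<bar>h y\<bar> \<le> k * ln (C + \<bar>E\<bar> + 2)" for y
    using abs_log_norm_le[of y k E] C_nonneg by (simp add: h_def)
  moreover have "(\<integral>x. h x \<partial>M) = avg_log_norm k E"
    unfolding avg_log_norm_def by (rule Bochner_Integration.integral_cong) (auto simp: h_def)
  ultimately have "AE x in M. \<exists>B. \<forall>N. birkhoff_sum h N x \<le> N * (avg_log_norm k E + \<epsilon>) + B"
    using birkhoff_sum_upper_bound[of h "k * ln (C + \<bar>E\<bar> + 2)" \<epsilon>] assms by simp
  moreover have "birkhoff_sum h N x = (\<Sum>i<N. log_norm T f k ((T ^^ i) x) E)" if "x \<in> space M" for N x
    using that by (simp add: birkhoff_sum_def h_def funpow_T_space)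
  ultimately show ?thesis
    by (auto elim!: AE_mp intro!: AE_I2)
qed

lemma log_norm_uniform_upper_bound:
  assumes "0 < \<eta>"
  shows "AE x in M. \<exists>\<delta>>0. \<exists>B. \<forall>N E. \<bar>E - E0\<bar> \<le> \<delta> \<longrightarrow>
    log_norm T f N x E \<le> N * (lyap M T f E0 + \<eta>) + B"
proof -
  obtain k where k: "1 \<le> k" "avg_log_norm k E0 / k < lyap M T f E0 + \<eta> / 3"
    using lyap_approx[of "\<eta> / 3" E0] assms by auto
  define K where "K = C + \<bar>E0\<bar> + 3"
  have "1 \<le> K" unfolding K_def using C_nonneg by simp
  define \<delta> where "\<delta> = min 1 (\<eta> / (3 * K ^ k))"
  have "0 < \<delta>" "\<delta> \<le> 1"
    using assms \<open>1 \<le> K\<close> by (auto simp: \<delta>_def)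
  have "K ^ k * \<delta> \<le> K ^ k * (\<eta> / (3 * K ^ k))"
    using \<open>1 \<le> K\<close> by (intro mult_left_mono) (auto simp: \<delta>_def)
  then have \<delta>_small: "K ^ k * \<delta> \<le> \<eta> / 3"
    using \<open>1 \<le> K\<close> by simp
  have "0 < k * \<eta> / 3"
    using assms k(1) by simp
  from AE_birkhoff_sum_log_norm_le[OF this, of k E0] show ?thesis
  proof (rule AE_mp, intro AE_I2 impI)
    fix x assume x: "x \<in> space M"
      and "\<exists>B. \<forall>N. (\<Sum>i<N. log_norm T f k ((T ^^ i) x) E0) \<le> N * (avg_log_norm k E0 + k * \<eta> / 3) + B"
    then obtain B where B: "\<And>N. (\<Sum>i<N. log_norm T f k ((T ^^ i) x) E0)
        \<le> N * (avg_log_norm k E0 + k * \<eta> / 3) + B"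
      by blast
    have "log_norm T f N x E \<le> N * (lyap M T f E0 + \<eta>) + (B + 2 * (real k)\<^sup>2 * ln K) / k"
      if E: "\<bar>E - E0\<bar> \<le> \<delta>" for N E
    proof -
      have "K ^ k * \<bar>E - E0\<bar> \<le> \<eta> / 3"
        using E \<delta>_small \<open>1 \<le> K\<close> by (meson mult_left_mono order.trans zero_le_power zero_le_one)
      moreover have "(avg_log_norm k E0 + k * \<eta> / 3) / k = avg_log_norm k E0 / k + \<eta> / 3"
        using k(1) by (simp add: field_simps)
      ultimately have "(avg_log_norm k E0 + k * \<eta> / 3) / k + K ^ k * \<bar>E - E0\<bar> \<le> lyap M T f E0 + \<eta>"
        using k(2) by linarith
      then have "N * ((avg_log_norm k E0 + k * \<eta> / 3) / k + K ^ k * \<bar>E - E0\<bar>) \<le> N * (lyap M T f E0 + \<eta>)"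
        by (rule mult_left_mono) simp
      moreover have "log_norm T f N x E
          \<le> N * ((avg_log_norm k E0 + k * \<eta> / 3) / k + K ^ k * \<bar>E - E0\<bar>) + (B + 2 * (real k)\<^sup>2 * ln K) / k"
        using \<open>\<delta> \<le> 1\<close> E k(1) unfolding K_def
        by (intro log_norm_le_if_birkhoff_bound B pot_bounded_shifted x) auto
      ultimately show ?thesis by linarith
    qed
    then show "\<exists>\<delta>>0. \<exists>B. \<forall>N E. \<bar>E - E0\<bar> \<le> \<delta> \<longrightarrow> log_norm T f N x E \<le> N * (lyap M T f E0 + \<eta>) + B"
      using \<open>0 < \<delta>\<close> by blast
  qed
qed

lemma AE_limsup_neg_log_Iint_le_add:
  assumes "0 < \<eta>"
  shows "AE x in M. limsup (\<lambda>N. ereal (- (1 / real N) * ln (Iint T f N x)))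
    \<le> ereal (2 * (lyap M T f E0 + \<eta>))"
  using log_norm_uniform_upper_bound[OF assms, of E0]
proof (rule AE_mp, intro AE_I2 impI)
  fix x assume x: "x \<in> space M"
    and "\<exists>\<delta>>0. \<exists>B. \<forall>N E. \<bar>E - E0\<bar> \<le> \<delta> \<longrightarrow> log_norm T f N x E \<le> N * (lyap M T f E0 + \<eta>) + B"
  then obtain \<delta> B where "0 < \<delta>"
    and bound: "\<And>N E. \<bar>E - E0\<bar> \<le> \<delta> \<Longrightarrow> log_norm T f N x E \<le> N * (lyap M T f E0 + \<eta>) + B"
    by blast
  have "- (1 / real N) * ln (Iint T f N x) \<le> 2 * (lyap M T f E0 + \<eta>) + (2 * B - ln (2 * \<delta>)) / N"
    if N: "1 \<le> N" for N
  proof -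
    let ?U = "N * (lyap M T f E0 + \<eta>) + B"
    have "0 < 2 * \<delta> * exp (- 2 * ?U)"
      using \<open>0 < \<delta>\<close> by simp
    then have "ln (2 * \<delta> * exp (- 2 * ?U)) \<le> ln (Iint T f N x)"
      using ln_mono[OF Iint_ge[OF x N \<open>0 < \<delta>\<close> bound[of _ N]]] by simp
    then have "- ln (Iint T f N x) \<le> N * (2 * (lyap M T f E0 + \<eta>)) + (2 * B - ln (2 * \<delta>))"
      using \<open>0 < \<delta>\<close> by (simp add: ln_mult algebra_simps)
    then show ?thesis
      using N by (simp add: field_simps)
  qed
  then show "limsup (\<lambda>N. ereal (- (1 / real N) * ln (Iint T f N x))) \<le> ereal (2 * (lyap M T f E0 + \<eta>))"
    by (rule limsup_le_if_le_plus_div)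
qed

lemma AE_limsup_neg_log_Iint_le:
  "AE x in M. limsup (\<lambda>N. ereal (- (1 / real N) * ln (Iint T f N x))) \<le> ereal (2 * lyap M T f E0)"
proof -
  let ?r = "\<lambda>x N. ereal (- (1 / real N) * ln (Iint T f N x))"
  define L where "L = lyap M T f E0"
  have "(\<lambda>m. ereal (2 * (L + inverse (Suc m)))) \<longlonglongrightarrow> ereal (2 * (L + 0))"
    by (intro tendsto_ereal tendsto_mult tendsto_add tendsto_const LIMSEQ_inverse_real_of_nat)
  then have lim: "(\<lambda>m. ereal (2 * (L + inverse (Suc m)))) \<longlonglongrightarrow> ereal (2 * L)"
    by simp
  have "AE x in M. \<forall>m. limsup (?r x) \<le> ereal (2 * (L + inverse (Suc m)))"
    unfolding AE_all_countable L_def by (intro allI AE_limsup_neg_log_Iint_le_add) simp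
  then show ?thesis
  proof (rule AE_mp, intro AE_I2 impI)
    fix x assume "\<forall>m. limsup (?r x) \<le> ereal (2 * (L + inverse (Suc m)))"
    then show "limsup (?r x) \<le> ereal (2 * lyap M T f E0)"
      unfolding L_def[symmetric] by (intro LIMSEQ_le_const[OF lim]) blast
  qed
qed

end

theorem theorem3p8:
  fixes M :: "'a measure" and phi :: "'a \<Rightarrow> 'a" and f :: "'a \<Rightarrow> real"
  assumes "prob_space M"
    and "phi \<in> M \<rightarrow>\<^sub>M M"
    and "bij_betw phi (space M) (space M)"
    and "the_inv_into (space M) phi \<in> M \<rightarrow>\<^sub>M M"
    and "distr M M phi = M"
    and "\<forall>A \<in> sets M. phi -` A \<inter> space M = A \<longrightarrow> measure M A = 0 \<or> measure M A = 1"
    and "f \<in> borel_measurable M"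
    and "\<exists>C. \<forall>\<omega> \<in> space M. \<bar>f \<omega>\<bar> \<le> C"
    and "continuous_on UNIV (lyap M phi f)"
  shows "\<exists>E0. (\<forall>E. lyap M phi f E0 \<le> lyap M phi f E) \<and>
    (AE \<omega> in M.
       0 \<le> liminf (\<lambda>N. ereal (- (1 / real N) * ln (Iint phi f N \<omega>))) \<and>
       liminf (\<lambda>N. ereal (- (1 / real N) * ln (Iint phi f N \<omega>)))
         \<le> limsup (\<lambda>N. ereal (- (1 / real N) * ln (Iint phi f N \<omega>))) \<and>
       limsup (\<lambda>N. ereal (- (1 / real N) * ln (Iint phi f N \<omega>)))
         \<le> ereal (2 * lyap M phi f E0))"
proof -
  \<comment> \<open>Only forward iterates of \<open>phi\<close> occur.\<close>
  obtain C where "\<forall>\<omega> \<in> space M. \<bar>f \<omega>\<bar> \<le> C"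
    using assms(8) by blast
  then interpret ergodic_schroedinger_cocycle M phi f C
    using assms(1,2,5,6,7)
    by (simp add: ergodic_schroedinger_cocycle_def schroedinger_cocycle_def schroedinger_cocycle_axioms_def
        ergodic_mpt_def ergodic_mpt_axioms_def mpt_def mpt_axioms_def)
  obtain E0 where E0: "\<forall>E. lyap M phi f E0 \<le> lyap M phi f E"
    using lyap_attains_min[OF assms(9)] by blast
  let ?r = "\<lambda>\<omega> N. ereal (- (1 / real N) * ln (Iint phi f N \<omega>))"
  have "AE \<omega> in M. 0 \<le> liminf (?r \<omega>) \<and> liminf (?r \<omega>) \<le> limsup (?r \<omega>)
      \<and> limsup (?r \<omega>) \<le> ereal (2 * lyap M phi f E0)"
    using AE_limsup_neg_log_Iint_le[of E0]
  proof (rule AE_mp, intro AE_I2 impI)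
    fix \<omega> assume "\<omega> \<in> space M"
    then show "limsup (?r \<omega>) \<le> ereal (2 * lyap M phi f E0) \<Longrightarrow>
        0 \<le> liminf (?r \<omega>) \<and> liminf (?r \<omega>) \<le> limsup (?r \<omega>) \<and> limsup (?r \<omega>) \<le> ereal (2 * lyap M phi f E0)"
      using liminf_neg_log_Iint_nonneg Liminf_le_Limsup[of sequentially] by simp
  qed
  then show ?thesis
    using E0 by blast
qed

end
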